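(* Let $X$ be a unital semiring and $\nu:X\to X$, $\nu(x)=x+x$, and $\nu X=\{a\in X: a=a+a\}$. The following are equivalent: (1) $2=4$ in $X$; (2) $\nu$ is a semiring homomorphism; (3) $\nu\circ\nu=\nu$; (4) the image of $\nu$ equals $\nu X$. If these hold, then $\nu X$ is a unital idempotent semiring with multiplicative unit $\nu(1)$, and the corestriction $X\to\nu X$ of $\nu$ is a unital semiring homomorphism.
   Context: A semiring $(X,+,0,\cdot)$: $(X,+,0)$ commutative monoid, $(X,\cdot)$ semigroup, distributivity, $0$ absorbing; unital: has a multiplicative unit $1$. A natural number $n$ is identified with $1+\dots+1$ ($n$ times) in $X$. A semiring homomorphism preserves addition, zero and multiplication; a unital one also preserves $1$. *)

theory Defs
  imports Main
begin

text \<open>We deliberately do not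
use semiring_1, since that class additionally demands 0 \<noteq> 1.\<close>
class unital_semiring = semiring_0 + monoid_mult

definition nu :: "'a::unital_semiring \<Rightarrow> 'a" where
  "nu x = x + x"

definition nuX :: "'a::unital_semiring set" where
  "nuX = {a. a = a + a}"

definition semiring_hom :: "('a::unital_semiring \<Rightarrow> 'b::unital_semiring) \<Rightarrow> bool" where
  "semiring_hom f \<longleftrightarrow> (\<forall>x y. f (x + y) = f x + f y) \<and> f 0 = 0 \<and> (\<forall>x y. f (x * y) = f x * f y)"

definition unital_idempotent_subsemiring :: "'a::unital_semiring set \<Rightarrow> 'a \<Rightarrow> bool" where
  "unital_idempotent_subsemiring S u \<longleftrightarrow>
     0 \<in> S \<and> u \<in> S \<and>
     (\<forall>a\<in>S. \<forall>b\<in>S. a + b \<in> S) \<and> (\<forall>a\<in>S. \<forall>b\<in>S. a * b \<in> S) \<and>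
     (\<forall>a\<in>S. u * a = a \<and> a * u = a) \<and> (\<forall>a\<in>S. a + a = a)"

end

theory Submission
  imports Defs
begin

text \<open>Everything hinges on the fact that doubling is multiplication by 2 from either side,
so that \<open>\<nu> x * \<nu> y = \<nu> (\<nu> (x * y)) = 4 x y\<close> and \<open>\<nu> (\<nu> x) = 4 x\<close>.  Hence each of the
conditions (2)--(4) reduces to \<open>\<nu> (\<nu> x) = \<nu> x\<close> for all \<open>x\<close>, which in turn is the instance
\<open>x = 1\<close>, i.e. \<open>4 = 2\<close>.  On \<open>\<nu>X\<close> the element \<open>\<nu> 1 = 2\<close> acts as the identity because
\<open>2 a = a + a = a\<close> there.\<close>

lemma nu_eq_two_mult: "nu x = (1 + 1) * (x::'a::unital_semiring)"
  by (simp add: nu_def distrib_right)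

lemma nu_eq_mult_two: "nu x = x * (1 + 1 :: 'a::unital_semiring)"
  by (simp add: nu_def distrib_left)

lemma nu_add: "nu (x + y) = nu x + nu (y::'a::unital_semiring)"
  by (simp add: nu_def ac_simps)

lemma nu_zero: "nu 0 = (0::'a::unital_semiring)"
  by (simp add: nu_def)

lemma nu_nu: "nu (nu x) = x + x + x + (x::'a::unital_semiring)"
  by (simp add: nu_def add.assoc)

lemma nu_mult_nu: "nu x * nu y = nu (nu (x * y :: 'a::unital_semiring))"
  by (simp add: nu_def distrib_left distrib_right add.assoc)

lemma mem_nuX_iff: "a \<in> nuX \<longleftrightarrow> nu a = a"
  by (auto simp: nuX_def nu_def)

lemma nu_comp_nu_iff: "nu \<circ> nu = (nu :: 'a::unital_semiring \<Rightarrow> 'a) \<longleftrightarrow> (1 + 1 :: 'a) = 1 + 1 + 1 + 1"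
proof
  assume "nu \<circ> nu = (nu :: 'a \<Rightarrow> 'a)"
  then have "nu (nu 1) = (nu 1 :: 'a)"
    by (metis comp_apply)
  then show "(1 + 1 :: 'a) = 1 + 1 + 1 + 1"
    by (simp add: nu_nu nu_def add.assoc)
next
  assume two_eq_four: "(1 + 1 :: 'a) = 1 + 1 + 1 + 1"
  have "nu (nu x) = nu x" for x :: 'a
  proof -
    have "nu (nu x) = (1 + 1 + 1 + 1) * x"
      by (simp add: nu_nu distrib_right)
    also have "\<dots> = nu x"
      by (simp add: nu_eq_two_mult two_eq_four[symmetric])
    finally show ?thesis .
  qed
  then show "nu \<circ> nu = (nu :: 'a \<Rightarrow> 'a)"
    by (simp add: fun_eq_iff)
qed

lemma semiring_hom_nu_iff: "semiring_hom (nu :: 'a::unital_semiring \<Rightarrow> 'a) \<longleftrightarrow> nu \<circ> nu = (nu :: 'a \<Rightarrow> 'a)"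
proof
  assume "semiring_hom (nu :: 'a \<Rightarrow> 'a)"
  then have "nu (1 * 1) = nu 1 * (nu 1 :: 'a)"
    unfolding semiring_hom_def by blast
  then have "nu (nu 1) = (nu 1 :: 'a)"
    by (simp add: nu_mult_nu)
  then have "(1 + 1 :: 'a) = 1 + 1 + 1 + 1"
    by (simp add: nu_nu nu_def add.assoc)
  then show "nu \<circ> nu = (nu :: 'a \<Rightarrow> 'a)"
    by (simp add: nu_comp_nu_iff)
next
  assume "nu \<circ> nu = (nu :: 'a \<Rightarrow> 'a)"
  then have "nu (nu z) = nu z" for z :: 'a
    by (metis comp_apply)
  then show "semiring_hom (nu :: 'a \<Rightarrow> 'a)"
    by (simp add: semiring_hom_def nu_add nu_zero nu_mult_nu)
qed

lemma nuX_subset_range_nu: "nuX \<subseteq> range (nu :: 'a::unital_semiring \<Rightarrow> 'a)"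
  by (auto simp: mem_nuX_iff intro: range_eqI[of _ nu, OF sym])

lemma range_nu_eq_nuX_iff: "range (nu :: 'a::unital_semiring \<Rightarrow> 'a) = nuX \<longleftrightarrow> nu \<circ> nu = (nu :: 'a \<Rightarrow> 'a)"
proof -
  have "range (nu :: 'a \<Rightarrow> 'a) = nuX \<longleftrightarrow> range (nu :: 'a \<Rightarrow> 'a) \<subseteq> nuX"
    using nuX_subset_range_nu by blast
  also have "\<dots> \<longleftrightarrow> nu \<circ> nu = (nu :: 'a \<Rightarrow> 'a)"
    by (auto simp: mem_nuX_iff fun_eq_iff image_subset_iff)
  finally show ?thesis .
qed

lemma nuX_unital_idempotent_subsemiring:
  assumes "nu 1 \<in> (nuX :: 'a::unital_semiring set)"
  shows "unital_idempotent_subsemiring (nuX :: 'a set) (nu 1)"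
  unfolding unital_idempotent_subsemiring_def
proof (intro conjI ballI)
  show "0 \<in> (nuX :: 'a set)" "nu 1 \<in> (nuX :: 'a set)"
    using assms by (simp_all add: mem_nuX_iff nu_zero)
next
  fix a b :: 'a
  assume "a \<in> nuX" "b \<in> nuX"
  then have a: "nu a = a" and b: "nu b = b"
    by (simp_all add: mem_nuX_iff)
  show "a + b \<in> nuX"
    by (simp add: mem_nuX_iff nu_add a b)
  show "a * b \<in> nuX"
  proof -
    have "nu (a * b) = nu a * b"
      by (simp add: nu_def distrib_right)
    then show ?thesis
      by (simp add: mem_nuX_iff a)
  qed
next
  fix a :: 'a
  assume "a \<in> nuX"
  then have a: "nu a = a"
    by (simp add: mem_nuX_iff)
  show "nu 1 * a = a"
    using a by (simp add: nu_eq_two_mult[of a] nu_def[of 1])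
  show "a * nu 1 = a"
    using a by (simp add: nu_eq_mult_two[of a] nu_def[of 1])
  show "a + a = a"
    using a by (simp add: nu_def)
qed

theorem proposition5p1:
  defines "two \<equiv> (1 + 1 :: 'a::unital_semiring)" and "four \<equiv> (1 + 1 + 1 + 1 :: 'a)"
  shows "(two = four \<longleftrightarrow> semiring_hom (nu :: 'a \<Rightarrow> 'a))
       \<and> (two = four \<longleftrightarrow> nu \<circ> nu = (nu :: 'a \<Rightarrow> 'a))
       \<and> (two = four \<longleftrightarrow> range (nu :: 'a \<Rightarrow> 'a) = nuX)
       \<and> (two = four \<longrightarrow>
            unital_idempotent_subsemiring (nuX :: 'a set) (nu 1)
            \<and> (\<forall>x::'a. nu x \<in> nuX) \<and> semiring_hom (nu :: 'a \<Rightarrow> 'a))"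
proof -
  have "two = four \<longleftrightarrow> nu \<circ> nu = (nu :: 'a \<Rightarrow> 'a)"
    unfolding two_def four_def by (rule nu_comp_nu_iff[symmetric])
  moreover have "nu \<circ> nu = (nu :: 'a \<Rightarrow> 'a) \<Longrightarrow> \<forall>x::'a. nu x \<in> nuX"
    by (metis comp_apply mem_nuX_iff)
  ultimately show ?thesis
    using semiring_hom_nu_iff range_nu_eq_nuX_iff nuX_unital_idempotent_subsemiring
    by blast
qed

end
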